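(* Assume $C\succ 0$ and $A_1,\dots,A_m$ are linearly independent. Let $X(t)$ be a differentiable solution of the second-ansatz dynamics $$\mathrm{vec}(\dot X) = -\bigl(I - G\mathcal{A}^T(\mathcal{A}G\mathcal{A}^T)^{-1} \mathcal{A}\bigr)G\,\mathrm{vec}(C),\qquad G=X\otimes X.$$ Then at any time $t$ with $X(t)\succ 0$, $$\frac{d}{dt}\ln\det X(t) \ \ge\ -\sqrt{n}\,\mathrm{tr}(CX(t)).$$
   Context: $C,A_1,\dots,A_m$ are symmetric $n\times n$ matrices and $b\in\mathbb{R}^m$. For an $n\times n$ matrix $M$, $\mathrm{vec}(M)\in\mathbb{R}^{n^2}$ is obtained by stacking the columns of $M$; $\otimes$ is the Kronecker product. $\mathcal{A}$ is the $m\times n^2$ matrix whose $\ell$-th row is $\mathrm{vec}(A_\ell)^T$. *)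

theory Defs
  imports "HOL-Analysis.Analysis"
begin

definition pos_def :: "real^'n^'n \<Rightarrow> bool" where
  "pos_def M \<longleftrightarrow> transpose M = M \<and> (\<forall>x. x \<noteq> 0 \<longrightarrow> 0 < x \<bullet> (M *v x))"

text \<open>Column-stacking vectorisation. The index (i,j) stands for the entry in row i and
  column j, i.e. position i + n*j of vec(M) (columns stacked).\<close>
definition vecM :: "'a^'n^'k \<Rightarrow> 'a^('k \<times> 'n)" where
  "vecM M = (\<chi> ij. M $ fst ij $ snd ij)"

text \<open>Kronecker product, with rows/columns indexed consistently with vecM:
  row (q,p) is position q + n*p, column (s,r) is position s + n*r, so that
  (A \<otimes> B)_{(q,p),(s,r)} = A_{p r} B_{q s}.\<close>
definition kron :: "real^'n^'n \<Rightarrow> real^'n^'n \<Rightarrow> real^('n \<times> 'n)^('n \<times> 'n)" where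
  "kron A B = (\<chi> qp sr. A $ snd qp $ snd sr * B $ fst qp $ fst sr)"

definition opA :: "('m \<Rightarrow> real^'n^'n) \<Rightarrow> real^('n \<times> 'n)^'m" where
  "opA A = (\<chi> l. vecM (A l))"

end

theory Submission
  imports Defs
begin

text \<open>By Jacobi's formula the derivative of \<open>ln det X\<close> is \<open>tr(X' X\<^sup>-\<^sup>1) = \<langle>u, vec X'\<rangle>\<close> with
  \<open>u = vec X\<^sup>-\<^sup>1\<close>, and the dynamics give \<open>vec X' = -S c\<close> with \<open>c = vec C\<close> and
  \<open>S = G - G\<A>\<^sup>T(\<A>G\<A>\<^sup>T)\<^sup>-\<^sup>1\<A>G\<close>. As a Schur complement, \<open>S\<close> is positive semidefinite and
  dominated by \<open>G = X \<otimes> X\<close>, so Cauchy--Schwarz for the form of \<open>S\<close> yields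
  \<open>\<langle>u, S c\<rangle>\<^sup>2 \<le> \<langle>u, G u\<rangle> \<langle>c, G c\<rangle> = n tr((CX)\<^sup>2) \<le> n tr(CX)\<^sup>2\<close>.\<close>

lemma inner_matrix_vector_transpose:
  "(x::real^'m) \<bullet> ((V::real^'n^'m) *v z) = (transpose V *v x) \<bullet> z"
  by (metis dot_lmul_matrix transpose_matrix_vector)

lemma inner_matrix_vector_symmetric:
  fixes M :: "real^'n^'n"
  assumes "transpose M = M"
  shows "x \<bullet> (M *v y) = y \<bullet> (M *v x)"
  by (metis assms inner_commute inner_matrix_vector_transpose)

lemma matrix_entry_inner_axis: "P $ i $ j = axis i 1 \<bullet> ((P::real^'n^'n) *v axis j 1)"
  by (simp add: inner_axis' matrix_vector_mul_component inner_axis)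

lemma transpose_diff: "transpose (P - Q) = transpose P - transpose (Q :: real^'n^'m)"
  by (simp add: transpose_def vec_eq_iff)

lemma matrix_diff_mult: "(A - B) ** C = A ** C - B ** (C :: real^'k^'n)"
  by (simp add: vec_eq_iff matrix_matrix_mult_def left_diff_distrib sum_subtractf)

lemma matrix_inv_right: "invertible (A :: real^'n^'n) \<Longrightarrow> A ** matrix_inv A = mat 1"
  and matrix_inv_left: "invertible (A :: real^'n^'n) \<Longrightarrow> matrix_inv A ** A = mat 1"
  unfolding invertible_def matrix_inv_def by (metis (mono_tags, lifting) someI_ex)+

lemma symmetric_matrix_inv:
  fixes A :: "real^'n^'n"
  assumes "invertible A" "transpose A = A"
  shows "transpose (matrix_inv A) = matrix_inv A"
proof -
  have "transpose (matrix_inv A) ** A = transpose (A ** matrix_inv A)"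
    by (simp add: matrix_transpose_mul assms(2))
  then have left_inv: "transpose (matrix_inv A) ** A = mat 1"
    by (simp add: matrix_inv_right[OF assms(1)])
  have "transpose (matrix_inv A) = (transpose (matrix_inv A) ** A) ** matrix_inv A"
    by (metis matrix_mul_assoc matrix_mul_rid matrix_inv_right[OF assms(1)])
  then show ?thesis by (simp add: left_inv)
qed

lemma invertible_if_ker_trivial:
  fixes A :: "real^'n^'n"
  assumes "\<And>x. A *v x = 0 \<Longrightarrow> x = 0"
  shows "invertible A"
  using matrix_left_invertible_ker[of A] assms invertible_left_inverse by blast

lemma inner_congruence:
  fixes V :: "real^'n^'m" and M :: "real^'n^'n"
  shows "x \<bullet> ((V ** M ** transpose V) *v x) = (transpose V *v x) \<bullet> (M *v (transpose V *v x))"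
  unfolding matrix_vector_mul_assoc[symmetric] by (rule inner_matrix_vector_transpose)

lemma transpose_congruence:
  fixes V :: "real^'n^'m" and M :: "real^'n^'n"
  shows "transpose M = M \<Longrightarrow> transpose (V ** M ** transpose V) = V ** M ** transpose V"
  by (simp add: matrix_transpose_mul matrix_mul_assoc)

section \<open>Positive semidefinite matrices\<close>

definition pos_semidef :: "real^'n^'n \<Rightarrow> bool" where
  "pos_semidef M \<longleftrightarrow> transpose M = M \<and> (\<forall>x. 0 \<le> x \<bullet> (M *v x))"

lemma pos_def_imp_pos_semidef: "pos_def M \<Longrightarrow> pos_semidef M"
  unfolding pos_def_def pos_semidef_def by (metis inner_zero_left less_imp_le order_refl)

lemma pos_semidef_entry_sym: "pos_semidef P \<Longrightarrow> P $ i $ j = P $ j $ i"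
  unfolding pos_semidef_def by (metis transpose_def vec_lambda_beta)

lemma nonneg_quadratic_discriminant:
  fixes a b c :: real
  assumes "\<And>t. 0 \<le> a * t\<^sup>2 + 2 * b * t + c" "0 \<le> a"
  shows "b\<^sup>2 \<le> a * c"
proof (cases "a = 0")
  case True
  show ?thesis
  proof (rule ccontr)
    assume "\<not> ?thesis"
    then have "b \<noteq> 0" using True by simp
    have "0 \<le> a * (-(c + 1) / (2 * b))\<^sup>2 + 2 * b * (-(c + 1) / (2 * b)) + c" by (rule assms(1))
    also have "\<dots> = -1" using True \<open>b \<noteq> 0\<close> by (simp add: field_simps)
    finally show False by simp
  qed
next
  case False
  then have "a > 0" using assms(2) by simp
  have "0 \<le> a * (-b / a)\<^sup>2 + 2 * b * (-b / a) + c" by (rule assms(1))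
  also have "\<dots> = c - b\<^sup>2 / a" using \<open>a > 0\<close> by (simp add: field_simps power2_eq_square)
  finally show ?thesis using \<open>a > 0\<close> by (simp add: field_simps)
qed

lemma pos_semidef_Cauchy_Schwarz:
  assumes "pos_semidef M"
  shows "(x \<bullet> (M *v y))\<^sup>2 \<le> (x \<bullet> (M *v x)) * (y \<bullet> (M *v y))"
proof (rule nonneg_quadratic_discriminant)
  fix t :: real
  have "0 \<le> (t *\<^sub>R x + y) \<bullet> (M *v (t *\<^sub>R x + y))"
    using assms unfolding pos_semidef_def by blast
  also have "\<dots> = (x \<bullet> (M *v x)) * t\<^sup>2 + 2 * (x \<bullet> (M *v y)) * t + y \<bullet> (M *v y)"
    using assms inner_matrix_vector_symmetric[of M x y] unfolding pos_semidef_def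
    by (simp add: matrix_vector_right_distrib matrix_vector_mult_scaleR inner_add_left inner_add_right
        power2_eq_square algebra_simps)
  finally show "0 \<le> (x \<bullet> (M *v x)) * t\<^sup>2 + 2 * (x \<bullet> (M *v y)) * t + y \<bullet> (M *v y)" .
  show "0 \<le> x \<bullet> (M *v x)" using assms unfolding pos_semidef_def by blast
qed

lemma pos_semidef_diag_nonneg: "pos_semidef P \<Longrightarrow> 0 \<le> P $ i $ i"
  unfolding pos_semidef_def matrix_entry_inner_axis by blast

lemma pos_semidef_entry_square_le:
  assumes "pos_semidef P"
  shows "(P $ i $ j)\<^sup>2 \<le> P $ i $ i * P $ j $ j"
  unfolding matrix_entry_inner_axis by (rule pos_semidef_Cauchy_Schwarz[OF assms])

lemma pos_semidef_diag_zero_imp_row_zero: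
  assumes "pos_semidef P" "P $ a $ a = 0"
  shows "P $ a $ j = 0"
  using pos_semidef_entry_square_le[OF assms(1), of a j] assms(2) by simp

lemma pos_semidef_pivot:
  assumes psd: "pos_semidef P" and pivot: "0 < P $ a $ a"
  shows "pos_semidef (P - (1 / P $ a $ a) *\<^sub>R (\<chi> i j. P $ i $ a * P $ j $ a))"
    (is "pos_semidef ?Q")
proof -
  have sym: "transpose P = P" using psd unfolding pos_semidef_def by simp
  have P_comm: "P $ i $ j = P $ j $ i" for i j by (rule pos_semidef_entry_sym[OF psd])
  define p where "p = P *v axis a 1"
  have p_inner: "p \<bullet> z = axis a 1 \<bullet> (P *v z)" for z
    unfolding p_def using inner_matrix_vector_symmetric[OF sym] by (simp add: inner_commute)
  have p_nth: "p $ i = P $ i $ a" for i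
    unfolding p_def matrix_entry_inner_axis by (simp add: inner_axis')
  have p_a: "p \<bullet> axis a 1 = P $ a $ a" by (simp add: inner_axis p_nth)
  have "(\<chi> i j. P $ i $ a * P $ j $ a) *v z = (p \<bullet> z) *\<^sub>R p" for z
    by (simp add: vec_eq_iff matrix_vector_mult_def inner_vec_def p_nth sum_distrib_left mult_ac)
  then have Q_form: "z \<bullet> (?Q *v z) = z \<bullet> (P *v z) - (p \<bullet> z)\<^sup>2 / P $ a $ a" for z
    by (simp add: matrix_vector_mult_diff_rdistrib scaleR_matrix_vector_assoc[symmetric]
        inner_diff_right power2_eq_square inner_commute)
  have "0 \<le> z \<bullet> (?Q *v z)" for z
  proof -
    define t where "t = (p \<bullet> z) / P $ a $ a"
    have "0 \<le> (z - t *\<^sub>R axis a 1) \<bullet> (P *v (z - t *\<^sub>R axis a 1))"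
      using psd unfolding pos_semidef_def by blast
    also have "\<dots> = z \<bullet> (P *v z) - 2 * t * (p \<bullet> z) + t\<^sup>2 * (p \<bullet> axis a 1)"
      using inner_matrix_vector_symmetric[OF sym, of z "axis a 1"]
      by (simp add: p_inner matrix_vector_mult_diff_distrib matrix_vector_mult_scaleR
          inner_diff_left inner_diff_right power2_eq_square algebra_simps)
    also have "\<dots> = z \<bullet> (?Q *v z)"
      unfolding Q_form p_a t_def using pivot by (simp add: power2_eq_square field_simps)
    finally show ?thesis .
  qed
  moreover have "transpose ?Q = ?Q"
    by (simp add: vec_eq_iff transpose_def P_comm)
  ultimately show ?thesis unfolding pos_semidef_def by blast
qed

definition outer_sum :: "('k \<Rightarrow> real^'n) \<Rightarrow> 'k set \<Rightarrow> real^'n^'n" where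
  "outer_sum v I = (\<chi> i j. \<Sum>k\<in>I. v k $ i * v k $ j)"

lemma outer_sum_insert:
  assumes "finite I" "a \<notin> I"
  shows "outer_sum (v(a := w)) (insert a I) = (\<chi> i j. w $ i * w $ j) + outer_sum v I"
proof -
  have "(\<Sum>k\<in>I. (v(a := w)) k $ i * (v(a := w)) k $ j) = (\<Sum>k\<in>I. v k $ i * v k $ j)" for i j
    using assms(2) by (intro sum.cong) auto
  then show ?thesis using assms by (simp add: outer_sum_def vec_eq_iff)
qed

text \<open>Symmetric Gaussian elimination, one pivot row at a time.\<close>

lemma pos_semidef_outer_sum_on:
  fixes I :: "'n::finite set" and P :: "real^'n^'n"
  assumes "finite I" "pos_semidef P" "\<And>i j. i \<notin> I \<Longrightarrow> P $ i $ j = 0"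
  shows "\<exists>v. P = outer_sum v I"
  using assms
proof (induction I arbitrary: P rule: finite_induct)
  case empty
  then show ?case by (auto simp: outer_sum_def vec_eq_iff)
next
  case (insert a I)
  show ?case
  proof (cases "P $ a $ a = 0")
    case True
    then have "P $ i $ j = 0" if "i \<notin> I" for i j
      using insert.prems pos_semidef_diag_zero_imp_row_zero that by (cases "i = a") auto
    then obtain v where "P = outer_sum v I" using insert.IH insert.prems(1) by blast
    then have "P = outer_sum (v(a := 0)) (insert a I)"
      by (simp add: outer_sum_insert[OF insert.hyps] vec_eq_iff)
    then show ?thesis by blast
  next
    case False
    then have pivot: "0 < P $ a $ a"
      using pos_semidef_diag_nonneg[OF insert.prems(1), of a] by (simp add: less_le)
    define Q where "Q = P - (1 / P $ a $ a) *\<^sub>R (\<chi> i j. P $ i $ a * P $ j $ a)"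
    have Q_support: "Q $ i $ j = 0" if "i \<notin> I" for i j
    proof (cases "i = a")
      case True
      then show ?thesis
        using pivot by (simp add: Q_def pos_semidef_entry_sym[OF insert.prems(1), of a j])
    next
      case False
      then show ?thesis using that insert.prems(2) by (simp add: Q_def)
    qed
    then obtain v where v: "Q = outer_sum v I"
      using insert.IH pos_semidef_pivot[OF insert.prems(1) pivot] Q_support Q_def by blast
    define w where "w = (1 / sqrt (P $ a $ a)) *\<^sub>R (\<chi> i. P $ i $ a)"
    have "w $ i * w $ j = P $ i $ a * P $ j $ a / P $ a $ a" for i j
      using pivot by (simp add: w_def real_sqrt_mult[symmetric] field_simps)
    then have "P = outer_sum (v(a := w)) (insert a I)"
      unfolding outer_sum_insert[OF insert.hyps] v[symmetric] by (simp add: Q_def vec_eq_iff)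
    then show ?thesis by blast
  qed
qed

lemma pos_semidef_Gram:
  assumes "pos_semidef (P :: real^'n^'n)"
  obtains V :: "real^'n^'n" where "P = transpose V ** V"
proof -
  have "\<exists>v :: 'n \<Rightarrow> real^'n. P = outer_sum v UNIV"
    by (rule pos_semidef_outer_sum_on) (use assms in auto)
  then obtain v :: "'n \<Rightarrow> real^'n" where "P = outer_sum v UNIV" ..
  then have "P = transpose (\<chi> k. v k) ** (\<chi> k. v k)"
    by (simp add: outer_sum_def matrix_matrix_mult_def transpose_def vec_eq_iff)
  then show ?thesis using that by blast
qed

lemma pos_def_invertible: "pos_def (X :: real^'n^'n) \<Longrightarrow> invertible X"
  unfolding pos_def_def by (metis inner_zero_right invertible_if_ker_trivial order_less_irrefl)

lemma pos_def_det_pos: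
  assumes "pos_def (X :: real^'n^'n)"
  shows "0 < det X"
proof -
  obtain V :: "real^'n^'n" where "X = transpose V ** V"
    using pos_semidef_Gram[OF pos_def_imp_pos_semidef[OF assms]] by blast
  then have "det X = (det V)\<^sup>2" by (simp add: det_mul power2_eq_square)
  moreover have "det X \<noteq> 0"
    using pos_def_invertible[OF assms] by (simp add: invertible_det_nz)
  ultimately show ?thesis by simp
qed

lemma pos_semidef_congruence:
  fixes V :: "real^'n^'m"
  shows "pos_semidef M \<Longrightarrow> pos_semidef (V ** M ** transpose V)"
  unfolding pos_semidef_def inner_congruence by (simp add: transpose_congruence)

lemma pos_def_congruence:
  fixes V :: "real^'n^'m"
  assumes "pos_def M" and ker: "\<And>y. transpose V *v y = 0 \<Longrightarrow> y = 0"
  shows "pos_def (V ** M ** transpose V)"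
  using assms unfolding pos_def_def inner_congruence by (metis transpose_congruence)

lemma pos_semidef_trace_nonneg: "pos_semidef B \<Longrightarrow> 0 \<le> trace B"
  unfolding trace_def by (intro sum_nonneg pos_semidef_diag_nonneg)

lemma pos_semidef_trace_square_le:
  assumes "pos_semidef B"
  shows "trace (B ** B) \<le> (trace B)\<^sup>2"
proof -
  have "trace (B ** B) = (\<Sum>i\<in>UNIV. \<Sum>j\<in>UNIV. (B $ i $ j)\<^sup>2)"
    by (simp add: trace_def matrix_matrix_mult_def power2_eq_square
        pos_semidef_entry_sym[OF assms, of _ i for i])
  also have "\<dots> \<le> (\<Sum>i\<in>UNIV. \<Sum>j\<in>UNIV. B $ i $ i * B $ j $ j)"
    by (intro sum_mono pos_semidef_entry_square_le[OF assms])
  also have "\<dots> = (trace B)\<^sup>2"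
    by (simp add: trace_def power2_eq_square sum_product)
  finally show ?thesis .
qed

lemma trace_mult_pos_semidef:
  fixes C X :: "real^'n^'n"
  assumes "pos_semidef C" "pos_semidef X"
  shows "0 \<le> trace (C ** X)" "trace (C ** X ** C ** X) \<le> (trace (C ** X))\<^sup>2"
proof -
  obtain V :: "real^'n^'n" where X: "X = transpose V ** V"
    using pos_semidef_Gram[OF assms(2)] by blast
  define B where "B = V ** C ** transpose V"
  have B: "pos_semidef B" unfolding B_def by (rule pos_semidef_congruence[OF assms(1)])
  have "trace (C ** X) = trace (V ** (C ** transpose V))"
    unfolding X by (metis matrix_mul_assoc trace_mul_sym)
  then have tr_CX: "trace (C ** X) = trace B" by (simp add: B_def matrix_mul_assoc)
  have "trace (C ** X ** C ** X) = trace (V ** (C ** transpose V ** V ** C ** transpose V))"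
    unfolding X by (metis matrix_mul_assoc trace_mul_sym)
  then have tr_CXCX: "trace (C ** X ** C ** X) = trace (B ** B)" by (simp add: B_def matrix_mul_assoc)
  show "0 \<le> trace (C ** X)" "trace (C ** X ** C ** X) \<le> (trace (C ** X))\<^sup>2"
    unfolding tr_CX tr_CXCX
    using pos_semidef_trace_nonneg[OF B] pos_semidef_trace_square_le[OF B] by auto
qed

lemma Schur_complement_bounds:
  fixes G :: "real^'k^'k" and V :: "real^'k^'m"
  assumes G: "pos_semidef G" and inv: "invertible (V ** G ** transpose V)"
  defines "S \<equiv> G - G ** transpose V ** matrix_inv (V ** G ** transpose V) ** V ** G"
  shows "pos_semidef S" and "w \<bullet> (S *v w) \<le> w \<bullet> (G *v w)"
proof -
  define M where "M = V ** G ** transpose V"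
  define K where "K = matrix_inv M"
  have G_sym: "transpose G = G" using G unfolding pos_semidef_def by simp
  have K_sym: "transpose K = K"
    unfolding K_def M_def using inv G_sym by (simp add: symmetric_matrix_inv transpose_congruence)
  have "transpose S = S"
    unfolding S_def transpose_diff
    by (simp add: matrix_transpose_mul matrix_mul_assoc G_sym K_sym[unfolded K_def M_def])
  have "0 \<le> x \<bullet> (S *v x) \<and> x \<bullet> (S *v x) \<le> x \<bullet> (G *v x)" for x
  proof -
    \<comment> \<open>\<open>u\<close> is the \<open>G\<close>-orthogonal projection of \<open>x\<close> onto the range of \<open>V\<^sup>T\<close>\<close>
    define y where "y = K *v (V *v (G *v x))"
    define u where "u = transpose V *v y"
    have My: "M *v y = V *v (G *v x)"
      using matrix_inv_right[OF inv[folded M_def]]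
      by (simp add: y_def K_def matrix_vector_mul_assoc matrix_mul_assoc)
    have "u \<bullet> (G *v x) = y \<bullet> (V *v (G *v x))"
      unfolding u_def by (simp add: inner_matrix_vector_transpose)
    also have "\<dots> = u \<bullet> (G *v u)"
      unfolding My[symmetric] u_def M_def by (simp add: inner_congruence)
    finally have uGx: "u \<bullet> (G *v x) = u \<bullet> (G *v u)" .
    have "x \<bullet> ((G ** transpose V ** K ** V ** G) *v x) = x \<bullet> (G *v u)"
      unfolding u_def y_def by (simp add: matrix_vector_mul_assoc matrix_mul_assoc)
    then have S_form: "x \<bullet> (S *v x) = x \<bullet> (G *v x) - u \<bullet> (G *v u)"
      unfolding S_def K_def[symmetric] M_def[symmetric]
      by (simp add: matrix_vector_mult_diff_rdistrib inner_diff_right uGx[symmetric]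
          inner_matrix_vector_symmetric[OF G_sym, of x u])
    have "(x - u) \<bullet> (G *v (x - u)) = x \<bullet> (S *v x)"
      unfolding S_form using inner_matrix_vector_symmetric[OF G_sym, of x u] uGx
      by (simp add: matrix_vector_mult_diff_distrib inner_diff_left inner_diff_right)
    moreover have "0 \<le> (x - u) \<bullet> (G *v (x - u))" "0 \<le> u \<bullet> (G *v u)"
      using G unfolding pos_semidef_def by auto
    ultimately show ?thesis unfolding S_form by linarith
  qed
  then show "pos_semidef S" "w \<bullet> (S *v w) \<le> w \<bullet> (G *v w)"
    using \<open>transpose S = S\<close> unfolding pos_semidef_def by auto
qed

section \<open>Vectorisation and Kronecker products\<close>

lemma sum_UNIV_prod:
  "(\<Sum>ij\<in>(UNIV :: ('a::finite \<times> 'b::finite) set). f ij) = (\<Sum>i\<in>UNIV. \<Sum>j\<in>UNIV. f (i, j))"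
  by (simp add: UNIV_Times_UNIV[symmetric] sum.cartesian_product del: UNIV_Times_UNIV)

lemma vecM_eq_0_iff: "vecM W = 0 \<longleftrightarrow> W = 0"
  by (auto simp: vecM_def vec_eq_iff)

lemma ex_vecM: "\<exists>W. w = vecM W"
  by (rule exI[of _ "\<chi> i j. w $ (i, j)"]) (simp add: vecM_def vec_eq_iff)

lemma inner_vecM: "vecM W \<bullet> vecM Z = trace (transpose W ** (Z :: real^'n^'n))"
  by (simp add: vecM_def inner_vec_def sum_UNIV_prod trace_def matrix_matrix_mult_def transpose_def)
     (subst sum.swap, simp)

lemma kron_mult_vecM: "kron P Q *v vecM W = vecM (Q ** W ** transpose P)"
proof -
  have "(kron P Q *v vecM W) $ (q, p) = vecM (Q ** W ** transpose P) $ (q, p)" for q p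
  proof -
    have "(kron P Q *v vecM W) $ (q, p) = (\<Sum>s\<in>UNIV. \<Sum>r\<in>UNIV. P $ p $ r * Q $ q $ s * W $ s $ r)"
      by (simp add: matrix_vector_mult_def kron_def vecM_def sum_UNIV_prod)
    also have "\<dots> = (\<Sum>r\<in>UNIV. (\<Sum>s\<in>UNIV. Q $ q $ s * W $ s $ r) * P $ p $ r)"
      by (subst sum.swap) (simp add: sum_distrib_left sum_distrib_right mult_ac)
    also have "\<dots> = vecM (Q ** W ** transpose P) $ (q, p)"
      by (simp add: vecM_def matrix_matrix_mult_def transpose_def)
    finally show ?thesis .
  qed
  then show ?thesis by (simp add: vec_eq_iff)
qed

lemma transpose_kron: "transpose (kron P Q) = kron (transpose P) (transpose Q)"
  by (simp add: kron_def transpose_def vec_eq_iff)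

lemma transpose_opA_mult: "transpose (opA A) *v y = vecM (\<Sum>l\<in>UNIV. y $ l *\<^sub>R A l)"
  by (simp add: vec_eq_iff opA_def vecM_def matrix_vector_mult_def transpose_def mult.commute)

lemma pos_def_kron_self:
  assumes "pos_def (X :: real^'n^'n)"
  shows "pos_def (kron X X)"
proof -
  have sym: "transpose X = X" using assms unfolding pos_def_def by simp
  obtain V :: "real^'n^'n" where X: "X = transpose V ** V"
    using pos_semidef_Gram[OF pos_def_imp_pos_semidef[OF assms]] by blast
  have "0 < w \<bullet> (kron X X *v w)" if "w \<noteq> 0" for w
  proof -
    obtain W where w: "w = vecM W" using ex_vecM by blast
    define B where "B = V ** W ** transpose V"
    have "w \<bullet> (kron X X *v w) = trace (transpose W ** (X ** W ** X))"
      unfolding w kron_mult_vecM inner_vecM sym ..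
    also have "\<dots> = trace ((transpose W ** transpose V ** V ** W ** transpose V) ** V)"
      unfolding X by (simp add: matrix_mul_assoc)
    also have "\<dots> = trace (transpose B ** B)"
      unfolding trace_mul_sym[of _ V] B_def by (simp add: matrix_transpose_mul matrix_mul_assoc)
    finally have form: "w \<bullet> (kron X X *v w) = vecM B \<bullet> vecM B"
      by (simp add: inner_vecM)
    have "B \<noteq> 0"
    proof
      assume "B = 0"
      moreover have "X ** W ** X = transpose V ** B ** V"
        unfolding X B_def by (simp add: matrix_mul_assoc)
      ultimately have "X ** W ** X = 0" by simp
      moreover have "matrix_inv X ** (X ** W ** X) ** matrix_inv X = W"
        using matrix_inv_left[OF pos_def_invertible[OF assms]]
          matrix_inv_right[OF pos_def_invertible[OF assms]]
        by (simp add: matrix_mul_assoc) (simp add: matrix_mul_assoc[symmetric])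
      ultimately have "W = 0" by simp
      with \<open>w \<noteq> 0\<close> show False by (simp add: w vecM_eq_0_iff)
    qed
    then show ?thesis unfolding form using vecM_eq_0_iff by fastforce
  qed
  then show ?thesis unfolding pos_def_def transpose_kron sym by blast
qed

section \<open>Jacobi's formula\<close>

lemma det_replace_row_mult:
  fixes M X :: "real^'n^'n"
  shows "det (\<chi> i. if i = j then (M ** X) $ j else X $ i) = M $ j $ j * det X"
proof -
  have row: "(M ** X) $ j = (\<Sum>k\<in>UNIV. M $ j $ k *s X $ k)"
    by (simp add: vec_eq_iff matrix_matrix_mult_def mult.commute)
  have "det (\<chi> i. if i = j then (M ** X) $ j else X $ i)
      = (\<Sum>k\<in>UNIV. det (\<chi> i. if i = j then M $ j $ k *s X $ k else X $ i))"
    unfolding row by (rule det_linear_row_sum) simp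
  also have "\<dots> = (\<Sum>k\<in>UNIV. M $ j $ k * det (\<chi> i. if i = j then X $ k else X $ i))"
    using det_row_mul[of j _ "\<lambda>_. X $ _" "\<lambda>i. X $ i"] by simp
  also have "\<dots> = (\<Sum>k\<in>UNIV. if k = j then M $ j $ j * det X else 0)"
  proof (rule sum.cong[OF refl])
    fix k
    show "M $ j $ k * det (\<chi> i. if i = j then X $ k else X $ i) = (if k = j then M $ j $ j * det X else 0)"
    proof (cases "k = j")
      case True
      then have "(\<chi> i. if i = j then X $ k else X $ i) = X" by (simp add: vec_eq_iff)
      then show ?thesis using True by simp
    next
      case False
      have "det (\<chi> i. if i = j then X $ k else X $ i) = 0"
        by (rule det_identical_rows[OF False]) (simp add: row_def vec_eq_iff False)
      then show ?thesis using False by simp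
    qed
  qed
  finally show ?thesis by simp
qed

lemma has_real_derivative_det_sum_rows:
  fixes X :: "real \<Rightarrow> real^'n^'n" and D :: "real^'n^'n"
  assumes "\<And>i j. ((\<lambda>s. X s $ i $ j) has_real_derivative D $ i $ j) (at t)"
  shows "((\<lambda>s. det (X s)) has_real_derivative
           (\<Sum>j\<in>UNIV. det (\<chi> i. if i = j then D $ j else X t $ i))) (at t)"
proof -
  let ?P = "{p. p permutes (UNIV :: 'n set)}"
  let ?Xj = "\<lambda>j. \<chi> i. if i = j then D $ j else X t $ i"
  have "(\<Prod>i\<in>UNIV. ?Xj j $ i $ p i) = D $ j $ p j * (\<Prod>i\<in>UNIV - {j}. X t $ i $ p i)"
    for j and p :: "'n \<Rightarrow> 'n"
    by (subst prod.remove[of _ j]) (auto intro!: prod.cong)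
  then have "(\<Sum>p\<in>?P. of_int (sign p) * (\<Sum>j\<in>UNIV. D $ j $ p j * (\<Prod>i\<in>UNIV - {j}. X t $ i $ p i)))
      = (\<Sum>j\<in>UNIV. det (?Xj j))"
    unfolding det_def by (simp add: sum_distrib_left sum.swap[of _ ?P])
  moreover have "((\<lambda>s. det (X s)) has_real_derivative
      (\<Sum>p\<in>?P. of_int (sign p) * (\<Sum>j\<in>UNIV. D $ j $ p j * (\<Prod>i\<in>UNIV - {j}. X t $ i $ p i)))) (at t)"
    unfolding det_def by (intro DERIV_sum DERIV_cmult has_field_derivative_prod assms)
  ultimately show ?thesis by simp
qed

lemma has_real_derivative_det:
  fixes X :: "real \<Rightarrow> real^'n^'n" and D :: "real^'n^'n"
  assumes "\<And>i j. ((\<lambda>s. X s $ i $ j) has_real_derivative D $ i $ j) (at t)"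
    and inv: "invertible (X t)"
  shows "((\<lambda>s. det (X s)) has_real_derivative det (X t) * trace (D ** matrix_inv (X t))) (at t)"
proof -
  have "D = (D ** matrix_inv (X t)) ** X t"
    by (simp add: matrix_mul_assoc[symmetric] matrix_inv_left[OF inv])
  then have "det (\<chi> i. if i = j then D $ j else X t $ i) = (D ** matrix_inv (X t)) $ j $ j * det (X t)"
    for j by (metis det_replace_row_mult)
  then show ?thesis
    using has_real_derivative_det_sum_rows[OF assms(1)]
    by (simp add: trace_def sum_distrib_left sum_distrib_right mult.commute)
qed

lemma has_real_derivative_ln_det:
  fixes X :: "real \<Rightarrow> real^'n^'n" and D :: "real^'n^'n"
  assumes "\<And>i j. ((\<lambda>s. X s $ i $ j) has_real_derivative D $ i $ j) (at t)"
    and "0 < det (X t)"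
  shows "((\<lambda>s. ln (det (X s))) has_real_derivative trace (D ** matrix_inv (X t))) (at t)"
proof -
  have "invertible (X t)" using assms(2) by (simp add: invertible_det_nz)
  from DERIV_chain2[OF DERIV_ln_divide has_real_derivative_det[OF assms(1) this]] assms(2)
  show ?thesis by simp
qed

lemma has_real_derivative_matrix_entry:
  "(X has_vector_derivative X') (at t) \<Longrightarrow> ((\<lambda>s. X s $ i $ j) has_real_derivative X' $ i $ j) (at t)"
  unfolding has_real_derivative_iff_has_vector_derivative
  by (intro bounded_linear.has_vector_derivative[OF bounded_linear_vec_nth])+

lemma projected_trace_lower_bound:
  fixes C X D :: "real^'n^'n" and S :: "real^('n \<times> 'n)^('n \<times> 'n)"
  assumes C: "pos_def C" and X: "pos_def X"
    and S: "pos_semidef S" and S_le: "\<And>w. w \<bullet> (S *v w) \<le> w \<bullet> (kron X X *v w)"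
    and D: "vecM D = - (S *v vecM C)"
  shows "- sqrt (real CARD('n)) * trace (C ** X) \<le> trace (D ** matrix_inv X)"
proof -
  define Y where "Y = matrix_inv X"
  define u where "u = vecM Y"
  define c where "c = vecM C"
  have X_sym: "transpose X = X" and C_sym: "transpose C = C"
    using X C unfolding pos_def_def by simp_all
  have inv: "X ** Y = mat 1" "Y ** X = mat 1"
    unfolding Y_def using matrix_inv_right matrix_inv_left pos_def_invertible[OF X] by auto
  have Y_sym: "transpose Y = Y"
    unfolding Y_def by (rule symmetric_matrix_inv[OF pos_def_invertible[OF X] X_sym])
  have "trace (D ** Y) = u \<bullet> vecM D"
    unfolding u_def inner_vecM Y_sym by (rule trace_mul_sym)
  then have tr_DY: "trace (D ** Y) = - (u \<bullet> (S *v c))"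
    unfolding D c_def by simp
  have "u \<bullet> (kron X X *v u) = trace (Y ** (X ** Y ** X))"
    unfolding u_def kron_mult_vecM inner_vecM X_sym Y_sym ..
  also have "\<dots> = real CARD('n)"
    by (simp add: matrix_mul_assoc[symmetric] inv trace_I)
  finally have uGu: "u \<bullet> (kron X X *v u) = real CARD('n)" .
  have cGc: "c \<bullet> (kron X X *v c) = trace (C ** X ** C ** X)"
    unfolding c_def kron_mult_vecM inner_vecM X_sym C_sym by (simp add: matrix_mul_assoc)
  note tr_CX = trace_mult_pos_semidef[OF pos_def_imp_pos_semidef[OF C] pos_def_imp_pos_semidef[OF X]]
  have "(u \<bullet> (S *v c))\<^sup>2 \<le> (u \<bullet> (S *v u)) * (c \<bullet> (S *v c))"
    by (rule pos_semidef_Cauchy_Schwarz[OF S])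
  also have "\<dots> \<le> (u \<bullet> (kron X X *v u)) * (c \<bullet> (kron X X *v c))"
    using S uGu unfolding pos_semidef_def by (intro mult_mono S_le) auto
  also have "\<dots> \<le> real CARD('n) * (trace (C ** X))\<^sup>2"
    unfolding uGu cGc using tr_CX(2) by (intro mult_left_mono) auto
  finally have "u \<bullet> (S *v c) \<le> sqrt (real CARD('n)) * trace (C ** X)"
    using real_le_rsqrt tr_CX(1) by (fastforce simp: real_sqrt_mult)
  then show ?thesis unfolding Y_def[symmetric] tr_DY by simp
qed

theorem lemma5p1:
  fixes C :: "real^'n^'n" and A :: "'m::finite \<Rightarrow> real^'n^'n"
    and X X' :: "real \<Rightarrow> real^'n^'n" and T :: "real set" and t :: real
  assumes C_pd: "pos_def C"
    and A_sym: "\<And>l. transpose (A l) = A l"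
    and A_indep: "\<And>c. (\<Sum>l\<in>UNIV. c l *\<^sub>R A l) = 0 \<Longrightarrow> (\<forall>l. c l = 0)"
    and T_open: "open T"
    and X_deriv: "\<And>s. s \<in> T \<Longrightarrow> (X has_vector_derivative X' s) (at s)"
    and X_ode: "\<And>s. s \<in> T \<Longrightarrow>
       vecM (X' s) = - ((mat 1 - kron (X s) (X s) ** transpose (opA A)
            ** matrix_inv (opA A ** kron (X s) (X s) ** transpose (opA A)) ** opA A)
            ** kron (X s) (X s)) *v vecM C"
    and t_in: "t \<in> T"
    and X_pd: "pos_def (X t)"
  shows "\<exists>D. ((\<lambda>s. ln (det (X s))) has_real_derivative D) (at t) \<and>
             D \<ge> - sqrt (real CARD('n)) * trace (C ** X t)"
proof -
  define G where "G = kron (X t) (X t)"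
  define V where "V = opA A"
  define S where "S = G - G ** transpose V ** matrix_inv (V ** G ** transpose V) ** V ** G"
  have G_pd: "pos_def G" unfolding G_def by (rule pos_def_kron_self[OF X_pd])
  have "y = 0" if "transpose V *v y = 0" for y
  proof -
    have "(\<Sum>l\<in>UNIV. y $ l *\<^sub>R A l) = 0"
      using that unfolding V_def transpose_opA_mult vecM_eq_0_iff .
    then show "y = 0" using A_indep by (simp add: vec_eq_iff)
  qed
  then have "invertible (V ** G ** transpose V)"
    by (intro pos_def_invertible pos_def_congruence[OF G_pd])
  note S_bounds = Schur_complement_bounds[OF pos_def_imp_pos_semidef[OF G_pd] this, folded S_def]
  have "vecM (X' t) = - (S *v vecM C)"
    using X_ode[OF t_in]
    by (simp add: S_def G_def V_def matrix_diff_mult matrix_mul_assoc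
        matrix_vector_mult_diff_rdistrib)
  from projected_trace_lower_bound[OF C_pd X_pd S_bounds[unfolded G_def] this]
    has_real_derivative_ln_det[OF has_real_derivative_matrix_entry[OF X_deriv[OF t_in]]
      pos_def_det_pos[OF X_pd]]
  show ?thesis by auto
qed

end
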